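(* For every $k\ge 1$, the bi-hypergraph obtained from $\mathcal H_{2k+1}$ by removing the edge $\{v_{2k+1,1},v_{2k+1,2},v_{2k+1,3}\}$ and adding the edges $\{v_{1,j},v_{2k+1,j},v_{2k+1,j+1}\}$ for all $j\in[3]$ is minimal uncolorable.
   Context: A bi-hypergraph $\mathcal H=(V,E)$ consists of a finite vertex set $V$ and a set $E$ of subsets of $V$, called edges, with no edge contained in another. A mapping $f:V\to\mathbb N$ is a proper coloring of $\mathcal H$ if $1<|f(e)|<|e|$ for every $e\in E$, where $f(e)=\{f(v):v\in e\}$. $\mathcal H$ is colorable if it has a proper coloring, and uncolorable otherwise. A subhypergraph of $\mathcal H$ is a bi-hypergraph $(V',E')$ with $V'\subseteq V$, $E'\subseteq E$; $\mathcal H$ is minimal uncolorable if it is uncolorable but every proper subhypergraph of it is colorable. For $k\ge 2$, $\mathcal H_k$ is the $3$-uniform bi-hypergraph with vertex set $\{v_{i,j}: i\in[k], j\in[3]\}$ (all distinct), with the convention $v_{i,4}=v_{i,1}$, $v_{i,5}=v_{i,2}$, whose edges are the sets $\{v_{i,1},v_{i,2},v_{i,3}\}$ for all $i\in[k]$ and the sets $\{v_{q+1,j},v_{q,j},v_{q,j+t}\}$ for all $q\in[k-1]$, $j\in[3]$, $t\in\{1,2\}$. *)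

theory Defs
  imports Main
begin

type_synonym 'a hypergraph = "'a set \<times> 'a set set"

definition bi_hypergraph :: "'a hypergraph \<Rightarrow> bool" where
  "bi_hypergraph H \<longleftrightarrow> finite (fst H) \<and> (\<forall>e\<in>snd H. e \<subseteq> fst H)
     \<and> (\<forall>e\<in>snd H. \<forall>e'\<in>snd H. e \<subseteq> e' \<longrightarrow> e = e')"

definition proper_coloring :: "'a hypergraph \<Rightarrow> ('a \<Rightarrow> nat) \<Rightarrow> bool" where
  "proper_coloring H f \<longleftrightarrow> (\<forall>e\<in>snd H. 1 < card (f ` e) \<and> card (f ` e) < card e)"

definition colorable :: "'a hypergraph \<Rightarrow> bool" where
  "colorable H \<longleftrightarrow> (\<exists>f. proper_coloring H f)"

definition subhypergraph :: "'a hypergraph \<Rightarrow> 'a hypergraph \<Rightarrow> bool" where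
  "subhypergraph H' H \<longleftrightarrow> bi_hypergraph H' \<and> fst H' \<subseteq> fst H \<and> snd H' \<subseteq> snd H"

definition minimal_uncolorable :: "'a hypergraph \<Rightarrow> bool" where
  "minimal_uncolorable H \<longleftrightarrow> bi_hypergraph H \<and> \<not> colorable H \<and>
     (\<forall>H'. subhypergraph H' H \<and> H' \<noteq> H \<longrightarrow> colorable H')"

definition idx3 :: "nat \<Rightarrow> nat" where
  "idx3 m = (m - 1) mod 3 + 1"

text \<open>Vertex v_{i,j} is the pair (i,j).\<close>
definition Hk_vertices :: "nat \<Rightarrow> (nat \<times> nat) set" where
  "Hk_vertices k = {1..k} \<times> {1..3}"

definition Hk_edges :: "nat \<Rightarrow> (nat \<times> nat) set set" where
  "Hk_edges k =
     {{(i,1),(i,2),(i,3)} | i. i \<in> {1..k}} \<union>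
     {{(q+1,j),(q,j),(q, idx3 (j+t))} | q j t. q \<in> {1..k-1} \<and> j \<in> {1..3} \<and> t \<in> {1,2}}"

definition Hk :: "nat \<Rightarrow> (nat \<times> nat) hypergraph" where
  "Hk k = (Hk_vertices k, Hk_edges k)"

definition Gk :: "nat \<Rightarrow> (nat \<times> nat) hypergraph" where
  "Gk k = (let n = 2*k+1 in
     (Hk_vertices n,
      (Hk_edges n - {{(n,1),(n,2),(n,3)}}) \<union>
      {{(1,j),(n,j),(n, idx3 (j+1))} | j. j \<in> {1..3}}))"

end

(* In a proper colouring of a 3-uniform bi-hypergraph every edge gets exactly two colours.
   The six link edges between two consecutive rows whose triangles are bichromatic force the
   lower row to be the upper one with its two colours swapped, so all odd rows 1, 3, ..., 2k-1
   coincide.  The closing edges act as links from row 2k+1 back to row 1 that would need the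
   opposite parity, which is impossible.  Deleting any single edge removes the obstruction:
   rows alternating as forced, with the pattern restarted (or a third colour introduced)
   at the deleted edge, give a proper colouring of the rest. *)

theory Submission
  imports Defs
begin

lemma proper_coloring_iff_bichromatic:
  assumes "\<forall>e\<in>snd H. card e = 3"
  shows "proper_coloring H f \<longleftrightarrow> (\<forall>e\<in>snd H. card (f ` e) = 2)"
  unfolding proper_coloring_def using assms by (intro ball_cong) auto

lemma bi_hypergraph_if_uniform:
  assumes "finite (fst H)" "\<forall>e\<in>snd H. e \<subseteq> fst H" "\<forall>e\<in>snd H. card e = c"
  shows "bi_hypergraph H"
  using assms unfolding bi_hypergraph_def by (metis card_subset_eq rev_finite_subset)

lemma minimal_uncolorableI:
  assumes "bi_hypergraph H" "\<not> colorable H" "fst H \<subseteq> \<Union>(snd H)"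
    and "\<And>e. e \<in> snd H \<Longrightarrow> colorable (fst H, snd H - {e})"
  shows "minimal_uncolorable H"
proof -
  have "colorable H'" if sub: "subhypergraph H' H" and "H' \<noteq> H" for H'
  proof -
    have "snd H' \<noteq> snd H"
    proof
      assume same_edges: "snd H' = snd H"
      have "\<forall>e\<in>snd H'. e \<subseteq> fst H'"
        using sub unfolding subhypergraph_def bi_hypergraph_def by blast
      then have "fst H \<subseteq> fst H'"
        using assms(3) same_edges by blast
      then have "fst H' = fst H"
        using sub unfolding subhypergraph_def by blast
      with same_edges \<open>H' \<noteq> H\<close> show False
        by (simp add: prod_eq_iff)
    qed
    then obtain e where "e \<in> snd H" "snd H' \<subseteq> snd H - {e}"
      using sub unfolding subhypergraph_def by blast
    moreover obtain f where "proper_coloring (fst H, snd H - {e}) f"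
      using assms(4) calculation(1) unfolding colorable_def by blast
    ultimately have "proper_coloring H' f"
      unfolding proper_coloring_def by auto
    then show ?thesis
      unfolding colorable_def by blast
  qed
  then show ?thesis
    using assms(1,2) unfolding minimal_uncolorable_def by blast
qed

lemma card_triple_eq_2_iff:
  "card {x, y, z} = 2 \<longleftrightarrow> (x = y \<and> y \<noteq> z) \<or> (x = z \<and> x \<noteq> y) \<or> (y = z \<and> x \<noteq> y)"
  by (auto simp: card_insert_if)

lemma atLeastAtMost_1_3: "{1..3::nat} = {1, 2, 3}"
  by auto

lemma idx3_simps [simp]: "idx3 2 = 2" "idx3 3 = 3" "idx3 4 = 1" "idx3 5 = 2"
  "idx3 (Suc (Suc 0)) = 2" "idx3 (Suc (Suc (Suc 0))) = 3"
  by (simp_all add: idx3_def)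

definition row_edge :: "nat \<Rightarrow> (nat \<times> nat) set" where
  "row_edge i = {(i,1), (i,2), (i,3)}"

definition link_edge :: "nat \<Rightarrow> nat \<Rightarrow> nat \<Rightarrow> (nat \<times> nat) set" where
  "link_edge q j t = {(q+1,j), (q,j), (q, idx3 (j+t))}"

definition closing_edge :: "nat \<Rightarrow> nat \<Rightarrow> (nat \<times> nat) set" where
  "closing_edge n j = {(1,j), (n,j), (n, idx3 (j+1))}"

lemma image_row_edge: "f ` row_edge i = {f (i,1), f (i,2), f (i,3)}"
  by (simp add: row_edge_def)

lemma image_link_edge: "f ` link_edge q j t = {f (Suc q, j), f (q, j), f (q, idx3 (j+t))}"
  by (simp add: link_edge_def)

lemma image_closing_edge: "f ` closing_edge n j = {f (1, j), f (n, j), f (n, idx3 (j+1))}"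
  by (simp add: closing_edge_def)

definition links_bichromatic :: "(nat \<times> nat \<Rightarrow> 'c) \<Rightarrow> nat \<Rightarrow> bool" where
  "links_bichromatic f q \<longleftrightarrow> (\<forall>j\<in>{1..3}. \<forall>t\<in>{1,2}. card (f ` link_edge q j t) = 2)"

lemma links_bichromatic_iff:
  "links_bichromatic f q \<longleftrightarrow>
     card {f (Suc q,1), f (q,1), f (q,2)} = 2 \<and> card {f (Suc q,1), f (q,1), f (q,3)} = 2 \<and>
     card {f (Suc q,2), f (q,2), f (q,3)} = 2 \<and> card {f (Suc q,2), f (q,2), f (q,1)} = 2 \<and>
     card {f (Suc q,3), f (q,3), f (q,1)} = 2 \<and> card {f (Suc q,3), f (q,3), f (q,2)} = 2"
  unfolding links_bichromatic_def atLeastAtMost_1_3 by (simp add: link_edge_def conj_ac)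

lemma link_colour_in_row:
  assumes "card (f ` row_edge q) = 2" "links_bichromatic f q" "j \<in> {1..3}"
  shows "f (Suc q, j) \<in> f ` row_edge q"
proof -
  have "j = 1 \<or> j = 2 \<or> j = 3" using assms(3) by auto
  then show ?thesis
    using assms(1,2) unfolding image_row_edge links_bichromatic_iff card_triple_eq_2_iff
    by (elim disjE) (simp; metis)+
qed

(* A colour persisting at j makes j the odd position of row q, and then the remaining
   links make row q+1 monochromatic. *)
lemma link_changes_colour:
  assumes "card (f ` row_edge q) = 2" "links_bichromatic f q" "card (f ` row_edge (Suc q)) = 2"
    "j \<in> {1..3}"
  shows "f (Suc q, j) \<noteq> f (q, j)"
proof -
  have "j = 1 \<or> j = 2 \<or> j = 3" using assms(4) by auto
  then show ?thesis
    using assms(1-3) unfolding image_row_edge links_bichromatic_iff card_triple_eq_2_iff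
    by (elim disjE) (simp; metis)+
qed

lemma rows_period_two:
  assumes "card (f ` row_edge q) = 2" "links_bichromatic f q"
    and "card (f ` row_edge (Suc q)) = 2" "links_bichromatic f (Suc q)"
    and "card (f ` row_edge (Suc (Suc q))) = 2" "j \<in> {1..3}"
  shows "f (Suc (Suc q), j) = f (q, j)"
proof -
  have "f ` row_edge (Suc q) \<subseteq> f ` row_edge q"
    using link_colour_in_row[OF assms(1,2), of 1] link_colour_in_row[OF assms(1,2), of 2]
      link_colour_in_row[OF assms(1,2), of 3]
    by (simp add: image_row_edge)
  then have same_colours: "f ` row_edge (Suc q) = f ` row_edge q"
    using assms(1,3) by (intro card_subset_eq) (simp_all add: image_row_edge)
  obtain a b where ab: "f ` row_edge q = {a, b}"
    using assms(1) card_2_iff by metis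
  have "f (q, j) \<in> {a, b}"
    using assms(6) ab unfolding atLeastAtMost_1_3 image_row_edge by blast
  moreover have "f (Suc q, j) \<in> {a, b}" "f (Suc (Suc q), j) \<in> {a, b}"
    using link_colour_in_row[OF assms(1,2,6)] link_colour_in_row[OF assms(3,4,6)]
    by (simp_all add: ab same_colours)
  moreover have "f (Suc q, j) \<noteq> f (q, j)" "f (Suc (Suc q), j) \<noteq> f (Suc q, j)"
    using link_changes_colour[OF assms(1-3,6)] link_changes_colour[OF assms(3-5,6)] by simp_all
  ultimately show ?thesis
    by auto
qed

(* Row q+1 is row q with its colours swapped, so the links below it give row q+2 the majority
   colour of row q at both majority positions; the closing edge through them is monochromatic. *)
lemma closing_edges_not_all_bichromatic:
  assumes "card (f ` row_edge q) = 2" "links_bichromatic f q"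
    "card (f ` row_edge (Suc q)) = 2" "links_bichromatic f (Suc q)"
    "\<forall>j\<in>{1..3}. card {f (q, j), f (Suc (Suc q), j), f (Suc (Suc q), idx3 (j+1))} = 2"
  shows False
proof -
  have "card {f (q, 1), f (Suc (Suc q), 1), f (Suc (Suc q), 2)} = 2"
    "card {f (q, 2), f (Suc (Suc q), 2), f (Suc (Suc q), 3)} = 2"
    "card {f (q, 3), f (Suc (Suc q), 3), f (Suc (Suc q), 1)} = 2"
    using assms(5) unfolding atLeastAtMost_1_3 by simp_all
  then show False
    using assms(1-4) unfolding image_row_edge links_bichromatic_iff card_triple_eq_2_iff
    by metis
qed

lemma fst_mem_row_edge: "v \<in> row_edge i \<Longrightarrow> fst v = i"
  by (auto simp: row_edge_def)

lemma Gk_vertices: "fst (Gk k) = {1..2*k+1} \<times> {1..3}"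
  by (simp add: Gk_def Hk_vertices_def Let_def)

lemma Gk_edges:
  "snd (Gk k) = row_edge ` {1..2*k}
     \<union> {link_edge q j t | q j t. q \<in> {1..2*k} \<and> j \<in> {1..3} \<and> t \<in> {1,2}}
     \<union> closing_edge (2*k+1) ` {1..3}"
proof -
  let ?links = "{link_edge q j t | q j t. q \<in> {1..2*k} \<and> j \<in> {1..3} \<and> t \<in> {1,2}}"
  have "snd (Gk k) = (Hk_edges (2*k+1) - {row_edge (2*k+1)}) \<union> closing_edge (2*k+1) ` {1..3}"
    unfolding Gk_def Let_def snd_conv row_edge_def[symmetric] closing_edge_def[symmetric]
      Setcompr_eq_image ..
  moreover have "Hk_edges (2*k+1) = insert (row_edge (2*k+1)) (row_edge ` {1..2*k}) \<union> ?links"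
    unfolding Hk_edges_def row_edge_def[symmetric] link_edge_def[symmetric] Setcompr_eq_image
    by (simp add: atLeastAtMostSuc_conv)
  moreover have "row_edge (2*k+1) \<notin> row_edge ` {1..2*k}"
  proof
    assume "row_edge (2*k+1) \<in> row_edge ` {1..2*k}"
    then obtain i where "i \<le> 2*k" "row_edge (2*k+1) = row_edge i"
      by auto
    moreover have "(i, 1) \<in> row_edge i"
      by (simp add: row_edge_def)
    ultimately show False
      using fst_mem_row_edge[of "(i, 1)" "2*k+1"] by simp
  qed
  moreover have "row_edge (2*k+1) \<notin> ?links"
  proof
    assume "row_edge (2*k+1) \<in> ?links"
    then obtain q j t where "q \<le> 2*k" "row_edge (2*k+1) = link_edge q j t"
      by auto
    moreover have "(q, j) \<in> link_edge q j t"
      by (simp add: link_edge_def)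
    ultimately show False
      using fst_mem_row_edge[of "(q, j)" "2*k+1"] by simp
  qed
  ultimately show ?thesis
    by (simp add: Un_Diff Diff_insert_absorb Diff_insert0)
qed

lemma Gk_edgeE:
  assumes "e \<in> snd (Gk k)"
  obtains (row) i where "i \<in> {1..2*k}" "e = row_edge i"
  | (link) q j t where "q \<in> {1..2*k}" "j \<in> {1..3}" "t \<in> {1,2}" "e = link_edge q j t"
  | (closing) j where "j \<in> {1..3}" "e = closing_edge (2*k+1) j"
  using assms unfolding Gk_edges by blast

lemma row_edge_in_Gk: "i \<in> {1..2*k} \<Longrightarrow> row_edge i \<in> snd (Gk k)"
  unfolding Gk_edges by blast

lemma link_edge_in_Gk:
  "q \<in> {1..2*k} \<Longrightarrow> j \<in> {1..3} \<Longrightarrow> t \<in> {1,2} \<Longrightarrow> link_edge q j t \<in> snd (Gk k)"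
  unfolding Gk_edges by blast

lemma closing_edge_in_Gk: "j \<in> {1..3} \<Longrightarrow> closing_edge (2*k+1) j \<in> snd (Gk k)"
  unfolding Gk_edges by blast

lemma card_row_edge: "card (row_edge i) = 3"
  by (simp add: row_edge_def)

lemma card_link_edge: "j \<in> {1..3} \<Longrightarrow> t \<in> {1,2} \<Longrightarrow> card (link_edge q j t) = 3"
  unfolding atLeastAtMost_1_3 link_edge_def by auto

lemma card_closing_edge: "n \<noteq> 1 \<Longrightarrow> j \<in> {1..3} \<Longrightarrow> card (closing_edge n j) = 3"
  unfolding atLeastAtMost_1_3 closing_edge_def by auto

lemma card_Gk_edge: "k \<ge> 1 \<Longrightarrow> e \<in> snd (Gk k) \<Longrightarrow> card e = 3"
  by (elim Gk_edgeE) (simp_all add: card_row_edge card_link_edge card_closing_edge)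

lemma Gk_edge_subset: "e \<in> snd (Gk k) \<Longrightarrow> e \<subseteq> fst (Gk k)"
  by (elim Gk_edgeE)
    (auto simp: Gk_vertices row_edge_def link_edge_def closing_edge_def idx3_def)

lemma bi_hypergraph_Gk:
  assumes "k \<ge> 1"
  shows "bi_hypergraph (Gk k)"
proof (rule bi_hypergraph_if_uniform)
  show "finite (fst (Gk k))"
    by (simp add: Gk_vertices)
  show "\<forall>e\<in>snd (Gk k). e \<subseteq> fst (Gk k)"
    using Gk_edge_subset by blast
  show "\<forall>e\<in>snd (Gk k). card e = 3"
    using card_Gk_edge assms by blast
qed

lemma Gk_vertices_covered: "fst (Gk k) \<subseteq> \<Union>(snd (Gk k))"
proof
  fix v assume "v \<in> fst (Gk k)"
  then obtain l j where v: "v = (l, j)" "l \<in> {1..2*k+1}" "j \<in> {1..3}"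
    by (auto simp: Gk_vertices)
  show "v \<in> \<Union>(snd (Gk k))"
  proof (cases "l = 2*k+1")
    case True
    then have "v \<in> closing_edge (2*k+1) j"
      using v(1) by (simp add: closing_edge_def)
    then show ?thesis
      using closing_edge_in_Gk[OF v(3)] by blast
  next
    case False
    then have "l \<in> {1..2*k}"
      using v(2) by simp
    moreover have "v \<in> row_edge l"
      using v(1,3) unfolding atLeastAtMost_1_3 row_edge_def by blast
    ultimately show ?thesis
      using row_edge_in_Gk by blast
  qed
qed

lemma Gk_not_colorable:
  assumes "k \<ge> 1"
  shows "\<not> colorable (Gk k)"
proof
  assume "colorable (Gk k)"
  then obtain f where "proper_coloring (Gk k) f"
    unfolding colorable_def ..
  moreover have "\<forall>e\<in>snd (Gk k). card e = 3"
    using card_Gk_edge[OF assms] by blast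
  ultimately have f: "\<forall>e\<in>snd (Gk k). card (f ` e) = 2"
    by (simp add: proper_coloring_iff_bichromatic)
  have rows: "card (f ` row_edge q) = 2" if "q \<in> {1..2*k}" for q
    using f row_edge_in_Gk[OF that] by blast
  have links: "links_bichromatic f q" if "q \<in> {1..2*k}" for q
    unfolding links_bichromatic_def using f link_edge_in_Gk[OF that] by blast
  have odd_rows: "f (2*m+1, j) = f (1, j)" if "2*m+1 \<le> 2*k-1" "j \<in> {1..3}" for m j
    using that(1)
  proof (induction m)
    case 0
    then show ?case by simp
  next
    case (Suc m)
    let ?q = "2*m+1"
    have "f (Suc (Suc ?q), j) = f (?q, j)"
      using Suc.prems by (intro rows_period_two rows links that(2)) auto
    then show ?case
      using Suc by simp
  qed
  define q where "q = 2*k-1"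
  have q: "q \<in> {1..2*k}" "Suc q \<in> {1..2*k}" "Suc (Suc q) = 2*k+1" "2*(k-1)+1 = q"
    using assms unfolding q_def by auto
  have "f (q, j) = f (1, j)" if "j \<in> {1..3}" for j
    using odd_rows[of "k-1" j] that unfolding q(4) q_def by simp
  moreover have "card (f ` closing_edge (2*k+1) j) = 2" if "j \<in> {1..3}" for j
    using f closing_edge_in_Gk[OF that] by blast
  ultimately have "\<forall>j\<in>{1..3}. card {f (q, j), f (Suc (Suc q), j), f (Suc (Suc q), idx3 (j+1))} = 2"
    unfolding q(3) image_closing_edge by simp
  then show False
    using closing_edges_not_all_bichromatic rows links q(1,2) by blast
qed

lemma colorable_Gk_minus_edgeI:
  fixes f :: "nat \<times> nat \<Rightarrow> nat"
  assumes "k \<ge> 1"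
    and "\<And>i. i \<in> {1..2*k} \<Longrightarrow> row_edge i \<noteq> e \<Longrightarrow> card (f ` row_edge i) = 2"
    and "\<And>q j t. q \<in> {1..2*k} \<Longrightarrow> j \<in> {1..3} \<Longrightarrow> t \<in> {1,2} \<Longrightarrow> link_edge q j t \<noteq> e
           \<Longrightarrow> card (f ` link_edge q j t) = 2"
    and "\<And>j. j \<in> {1..3} \<Longrightarrow> closing_edge (2*k+1) j \<noteq> e
           \<Longrightarrow> card (f ` closing_edge (2*k+1) j) = 2"
  shows "colorable (fst (Gk k), snd (Gk k) - {e})"
proof -
  have "card (f ` e') = 2" if "e' \<in> snd (Gk k)" "e' \<noteq> e" for e'
    using that(1) by (cases rule: Gk_edgeE) (use assms(2-4) that(2) in auto)
  moreover have "card e' = 3" if "e' \<in> snd (Gk k)" for e'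
    using card_Gk_edge[OF assms(1) that] .
  ultimately have "proper_coloring (fst (Gk k), snd (Gk k) - {e}) f"
    by (simp add: proper_coloring_iff_bichromatic)
  then show ?thesis
    unfolding colorable_def by blast
qed

(* By link_changes_colour, consecutive bichromatic rows joined by bichromatic links always
   look like this. *)
definition alternating_rows :: "nat \<Rightarrow> 'c \<Rightarrow> 'c \<Rightarrow> nat \<times> nat \<Rightarrow> 'c" where
  "alternating_rows p a b = (\<lambda>(l, j). if (j = p) = odd l then b else a)"

lemma colorable_Gk_minus_closing_edge:
  assumes "k \<ge> 1" "j0 \<in> {1..3}"
  shows "colorable (fst (Gk k), snd (Gk k) - {closing_edge (2*k+1) j0})"
proof (rule colorable_Gk_minus_edgeI[where f = "alternating_rows (idx3 (j0+2)) (0::nat) 1"])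
  have j0: "j0 = 1 \<or> j0 = 2 \<or> j0 = 3"
    using assms(2) by auto
  show "card (alternating_rows (idx3 (j0+2)) (0::nat) 1 ` row_edge i) = 2" for i
    using j0 unfolding image_row_edge card_triple_eq_2_iff
    by (elim disjE) (simp_all add: alternating_rows_def)
  show "card (alternating_rows (idx3 (j0+2)) (0::nat) 1 ` link_edge q j t) = 2"
    if "j \<in> {1..3}" "t \<in> {1,2}" for q j t
  proof -
    have "j = 1 \<or> j = 2 \<or> j = 3" "t = 1 \<or> t = 2"
      using that by auto
    then show ?thesis
      using j0 unfolding image_link_edge card_triple_eq_2_iff
      by (elim disjE) (simp_all add: alternating_rows_def)
  qed
  show "card (alternating_rows (idx3 (j0+2)) (0::nat) 1 ` closing_edge (2*k+1) j) = 2"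
    if "j \<in> {1..3}" "closing_edge (2*k+1) j \<noteq> closing_edge (2*k+1) j0" for j
  proof -
    have "j = 1 \<or> j = 2 \<or> j = 3" "j \<noteq> j0"
      using that by auto
    then show ?thesis
      using j0 unfolding image_closing_edge card_triple_eq_2_iff
      by (elim disjE) (simp_all add: alternating_rows_def)
  qed
qed (rule assms(1))

(* Row i is monochromatic; below it a third colour 2 alternates with the colour not used on
   row i, and row 2k+1 gets colour 2 so that every closing edge sees 2 and a colour of row 1. *)
definition coloring_minus_row_edge :: "nat \<Rightarrow> nat \<Rightarrow> nat \<times> nat \<Rightarrow> nat" where
  "coloring_minus_row_edge n i = (\<lambda>(l, j).
     if l < i then alternating_rows 3 0 1 (l, j)
     else if l = i then (if odd i then 0 else 1)
     else if l < n then alternating_rows 3 2 (if odd i then 1 else 0) (l, j)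
     else 2)"

lemma colorable_Gk_minus_row_edge:
  assumes "k \<ge> 1" "i \<in> {1..2*k}"
  shows "colorable (fst (Gk k), snd (Gk k) - {row_edge i})"
proof (rule colorable_Gk_minus_edgeI[where f = "coloring_minus_row_edge (2*k+1) i"])
  have i_bounds: "1 \<le> i" "i \<le> 2*k"
    using assms(2) by simp_all
  show "card (coloring_minus_row_edge (2*k+1) i ` row_edge l) = 2"
    if "l \<in> {1..2*k}" "row_edge l \<noteq> row_edge i" for l
    using that unfolding image_row_edge card_triple_eq_2_iff
    by (auto simp: coloring_minus_row_edge_def alternating_rows_def)
  show "card (coloring_minus_row_edge (2*k+1) i ` link_edge q j t) = 2"
    if "q \<in> {1..2*k}" "j \<in> {1..3}" "t \<in> {1,2}" for q j t
  proof -
    have "j = 1 \<or> j = 2 \<or> j = 3" "t = 1 \<or> t = 2"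
      using that by auto
    then show ?thesis
      using that(1) assms(2) unfolding image_link_edge card_triple_eq_2_iff
      by (elim disjE; auto simp: coloring_minus_row_edge_def alternating_rows_def;
          use i_bounds in presburger)
  qed
  show "card (coloring_minus_row_edge (2*k+1) i ` closing_edge (2*k+1) j) = 2"
    if "j \<in> {1..3}" for j
  proof -
    have "j = 1 \<or> j = 2 \<or> j = 3"
      using that by auto
    then show ?thesis
      using assms unfolding image_closing_edge card_triple_eq_2_iff
      by (elim disjE) (auto simp: coloring_minus_row_edge_def alternating_rows_def)
  qed
qed (rule assms(1))

(* Below the deleted link the alternating pattern restarts: with a shifted odd position if
   t0 = 2, with a third colour if t0 = 1. *)
definition coloring_minus_link_edge :: "nat \<Rightarrow> nat \<Rightarrow> nat \<Rightarrow> nat \<Rightarrow> nat \<times> nat \<Rightarrow> nat" where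
  "coloring_minus_link_edge n q0 j0 t0 = (\<lambda>(l, j).
     if l \<le> q0 then alternating_rows (idx3 (j0+1)) 0 1 (l, j)
     else if t0 = 2 then alternating_rows (idx3 (j0+2)) 1 0 (l, j)
     else if even q0 then alternating_rows j0 0 2 (l, j)
     else if l < n then alternating_rows j0 2 1 (l, j)
     else 2)"

lemma colorable_Gk_minus_link_edge:
  assumes "k \<ge> 1" "q0 \<in> {1..2*k}" "j0 \<in> {1..3}" "t0 \<in> {1,2}"
  shows "colorable (fst (Gk k), snd (Gk k) - {link_edge q0 j0 t0})"
proof (rule colorable_Gk_minus_edgeI[where f = "coloring_minus_link_edge (2*k+1) q0 j0 t0"])
  have q0_bounds: "1 \<le> q0" "q0 \<le> 2*k"
    using assms(2) by simp_all
  have j0: "j0 = 1 \<or> j0 = 2 \<or> j0 = 3" and t0: "t0 = 1 \<or> t0 = 2"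
    using assms(3,4) by auto
  show "card (coloring_minus_link_edge (2*k+1) q0 j0 t0 ` row_edge l) = 2"
    if "l \<in> {1..2*k}" for l
    using that j0 t0 unfolding image_row_edge card_triple_eq_2_iff
    by (elim disjE) (auto simp: coloring_minus_link_edge_def alternating_rows_def)
  show "card (coloring_minus_link_edge (2*k+1) q0 j0 t0 ` link_edge q j t) = 2"
    if "q \<in> {1..2*k}" "j \<in> {1..3}" "t \<in> {1,2}" "link_edge q j t \<noteq> link_edge q0 j0 t0"
    for q j t
  proof -
    have "j = 1 \<or> j = 2 \<or> j = 3" "t = 1 \<or> t = 2" "(q, j, t) \<noteq> (q0, j0, t0)"
      using that by auto
    then show ?thesis
      using that(1) j0 t0 unfolding image_link_edge card_triple_eq_2_iff
      by (elim disjE; auto simp: coloring_minus_link_edge_def alternating_rows_def;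
          use q0_bounds in presburger)
  qed
  show "card (coloring_minus_link_edge (2*k+1) q0 j0 t0 ` closing_edge (2*k+1) j) = 2"
    if "j \<in> {1..3}" for j
  proof -
    have "j = 1 \<or> j = 2 \<or> j = 3"
      using that by auto
    then show ?thesis
      using j0 t0 q0_bounds unfolding image_closing_edge card_triple_eq_2_iff
      by (elim disjE) (auto simp: coloring_minus_link_edge_def alternating_rows_def)
  qed
qed (rule assms(1))

lemma colorable_Gk_minus_edge:
  assumes "k \<ge> 1" "e \<in> snd (Gk k)"
  shows "colorable (fst (Gk k), snd (Gk k) - {e})"
  using assms(2)
proof (cases rule: Gk_edgeE)
  case (row i)
  then show ?thesis
    using colorable_Gk_minus_row_edge[OF assms(1)] by simp
next
  case (link q j t)
  then show ?thesis
    using colorable_Gk_minus_link_edge[OF assms(1)] by simp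
next
  case (closing j)
  then show ?thesis
    using colorable_Gk_minus_closing_edge[OF assms(1)] by simp
qed

theorem mainTheorem16:
  fixes k :: nat
  assumes "k \<ge> 1"
  shows "minimal_uncolorable (Gk k)"
  using bi_hypergraph_Gk[OF assms] Gk_not_colorable[OF assms] Gk_vertices_covered
    colorable_Gk_minus_edge[OF assms]
  by (rule minimal_uncolorableI)

end
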